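(* For any $\epsilon>0$ and $N$ sufficiently large, there exists $\delta\in(0,\epsilon)$ such that for all $\bm\sigma\in S_N^n$ and $\bm\omega\in(\mathbb{R}^M)^n$ for which $\Psi(\bm\sigma,\bm\omega)$ is defined, $$\mathbf 1_{Q^\epsilon_{M+N}}\big(\Psi(\bm\sigma,\bm\omega)\big)\ge\mathbf 1_{Q^\epsilon_N}(\bm\sigma)\,\mathbf 1_{\Omega^{\epsilon/2,\delta}_M}(\bm\omega).$$
   Context: $n\ge1$, $M\ge1$ fixed. $S_K$ = sphere of radius $\sqrt K$ in $\mathbb{R}^K$. Overlap of $\bm\sigma,\bm\sigma'\in(\mathbb{R}^K)^n$: $\bm R(\bm\sigma,\bm\sigma')=(\frac1K\sum_{i\le K}\sigma_i(j)\sigma'_i(j'))_{j,j'\le n}$. $\bm Q$ is a symmetric positive semidefinite $n\times n$ matrix with unit diagonal; $Q^\epsilon_K=\{\bm\sigma\in S_K^n:\|\bm R(\bm\sigma,\bm\sigma)-\bm Q\|_\infty\le\epsilon\}$ (max-entry norm). For $\bm\omega(j)\in\mathbb{R}^M$ write $\bm\omega(j)=s_j\bm\tau(j)$ with $s_j=\|\bm\omega(j)\|/\sqrt M$ and $\bm\tau(j)\in S_M$; $\Omega^{\epsilon/2,\delta}_M=\{(s_j\bm\tau(j))_{j\le n}:\bm\tau\in Q^{\epsilon/2}_M,\ s_j\in[\sqrt{1-\delta},\sqrt{1+\delta}]\ \forall j\}$. For $\bm x\in\mathbb{R}^M$, $a_1(\bm x)=1$ and $a_\ell(\bm x)=\prod_{j=1}^{\ell-1}\sqrt{1+\frac{1-x_j^2}{M+N-j}}$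 for $1<\ell\le M+1$. For $\bm\sigma\in S_N$, $\bm\omega\in\mathbb{R}^M$, $\psi(\bm\sigma,\bm\omega)=(\sigma_1a_{M+1}(\bm\omega),\dots,\sigma_Na_{M+1}(\bm\omega),\omega_1a_1(\bm\omega),\dots,\omega_Ma_M(\bm\omega))$, and $\Psi(\bm\sigma,\bm\omega)=(\psi(\bm\sigma(j),\bm\omega(j)))_{j\le n}$ for $\bm\sigma\in S_N^n$, $\bm\omega\in(\mathbb{R}^M)^n$. *)

theory Defs
  imports "HOL-Analysis.Analysis"
begin

text \<open>Conventions: a vector in R^K is a function nat => real, used on the indices 1..K
  (as in the paper). An n-tuple of vectors is a function nat => nat => real,
  sigma j i = i-th coordinate of the j-th replica, j in 1..n.\<close>

definition on_sphere :: "nat \<Rightarrow> (nat \<Rightarrow> real) \<Rightarrow> bool" where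
  "on_sphere K x \<longleftrightarrow> (\<Sum>i=1..K. (x i)^2) = real K"

definition overlap :: "nat \<Rightarrow> (nat \<Rightarrow> nat \<Rightarrow> real) \<Rightarrow> (nat \<Rightarrow> nat \<Rightarrow> real) \<Rightarrow> nat \<Rightarrow> nat \<Rightarrow> real" where
  "overlap K \<sigma> \<sigma>' j j' = (1 / real K) * (\<Sum>i=1..K. \<sigma> j i * \<sigma>' j' i)"

definition Qset :: "nat \<Rightarrow> nat \<Rightarrow> (nat \<Rightarrow> nat \<Rightarrow> real) \<Rightarrow> real \<Rightarrow> (nat \<Rightarrow> nat \<Rightarrow> real) set" where
  "Qset K n Q eps = {\<sigma>. (\<forall>j\<in>{1..n}. on_sphere K (\<sigma> j)) \<and>
      (\<forall>j\<in>{1..n}. \<forall>j'\<in>{1..n}. \<bar>overlap K \<sigma> \<sigma> j j' - Q j j'\<bar> \<le> eps)}"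

definition Omega_set :: "nat \<Rightarrow> nat \<Rightarrow> (nat \<Rightarrow> nat \<Rightarrow> real) \<Rightarrow> real \<Rightarrow> real \<Rightarrow> (nat \<Rightarrow> nat \<Rightarrow> real) set" where
  "Omega_set M n Q eps' \<delta> = {\<omega>. \<exists>s \<tau>. \<tau> \<in> Qset M n Q eps' \<and>
      (\<forall>j\<in>{1..n}. s j \<in> {sqrt (1 - \<delta>)..sqrt (1 + \<delta>)} \<and> (\<forall>i\<in>{1..M}. \<omega> j i = s j * \<tau> j i))}"

definition a_fun :: "nat \<Rightarrow> nat \<Rightarrow> (nat \<Rightarrow> real) \<Rightarrow> nat \<Rightarrow> real" where
  "a_fun M N x l = (\<Prod>k=1..l-1. sqrt (1 + (1 - (x k)^2) / (real (M + N) - real k)))"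

definition psi :: "nat \<Rightarrow> nat \<Rightarrow> (nat \<Rightarrow> real) \<Rightarrow> (nat \<Rightarrow> real) \<Rightarrow> nat \<Rightarrow> real" where
  "psi M N \<sigma> \<omega> i = (if i \<le> N then \<sigma> i * a_fun M N \<omega> (M + 1)
                      else \<omega> (i - N) * a_fun M N \<omega> (i - N))"

definition Psi :: "nat \<Rightarrow> nat \<Rightarrow> (nat \<Rightarrow> nat \<Rightarrow> real) \<Rightarrow> (nat \<Rightarrow> nat \<Rightarrow> real) \<Rightarrow> nat \<Rightarrow> nat \<Rightarrow> real" where
  "Psi M N \<sigma> \<omega> j = psi M N (\<sigma> j) (\<omega> j)"

text \<open>Psi(sigma, omega) is defined iff all square-root arguments are nonnegative.\<close>
definition Psi_defined :: "nat \<Rightarrow> nat \<Rightarrow> nat \<Rightarrow> (nat \<Rightarrow> nat \<Rightarrow> real) \<Rightarrow> bool" where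
  "Psi_defined M N n \<omega> \<longleftrightarrow> (\<forall>j\<in>{1..n}. \<forall>k\<in>{1..M}.
      0 \<le> 1 + (1 - (\<omega> j k)^2) / (real (M + N) - real k))"

end

theory Submission
  imports Defs
begin

text \<open>Write \<open>a_l(x)^2\<close> as the product of the factors \<open>1 + (1 - x_k^2) / (M + N - k)\<close> over \<open>k < l\<close>.
  These factors are chosen so that \<open>\<Sum>(l \<le> L) x_l^2 a_l^2 + (M + N - L) a_(L+1)^2\<close> does not
  depend on \<open>L\<close>; taking \<open>L = M\<close> shows that \<open>\<psi>\<close> maps into \<open>S_(M+N)\<close> wherever it is defined.
  If \<open>\<omega>(j) = s_j \<tau>(j)\<close> with \<open>\<tau>(j) \<in> S_M\<close> and \<open>|s_j^2 - 1| \<le> \<delta>\<close>, every \<open>a_l^2\<close> is within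
  \<open>\<eta> = 2M(2M + 1)/N\<close> of one, and the same identity sharpens this to
  \<open>N |a_(M+1)^2 - 1| \<le> M (2\<eta> + \<delta>)\<close>. Hence \<open>(M + N) R(\<Psi>(\<sigma>, \<omega>))\<close> equals \<open>N R(\<sigma>) + M R(\<tau>)\<close>
  up to an error \<open>O(M (\<eta> + \<delta>))\<close>, which is at most \<open>M \<epsilon>/2\<close> once \<open>N \<ge> 96 M (2M + 1)/\<epsilon>\<close>
  and \<open>\<delta> \<le> \<epsilon>/16\<close>.\<close>

lemma real_sqrt_prod: "sqrt (\<Prod>k\<in>K. f k) = (\<Prod>k\<in>K. sqrt (f k))"
  by (induction K rule: infinite_finite_induct) (auto simp: real_sqrt_mult)

lemma prod_one_plus_close_to_one:
  fixes f :: "'a \<Rightarrow> real"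
  assumes "finite K" and "\<forall>k\<in>K. \<bar>f k\<bar> \<le> t" and "real (card K) * t \<le> 1/2"
  shows "\<bar>(\<Prod>k\<in>K. 1 + f k) - 1\<bar> \<le> 2 * real (card K) * t"
  using assms
proof (induction K rule: finite_induct)
  case empty
  then show ?case by simp
next
  case (insert a F)
  let ?P = "\<Prod>k\<in>F. 1 + f k"
  have fa: "\<bar>f a\<bar> \<le> t" using insert.prems by simp
  then have "0 \<le> t" by (meson abs_ge_zero order_trans)
  then have "real (card F) * t \<le> 1/2" using insert by (simp add: algebra_simps)
  then have IH: "\<bar>?P - 1\<bar> \<le> 2 * real (card F) * t" using insert by simp
  with \<open>real (card F) * t \<le> 1/2\<close> have "\<bar>?P\<bar> \<le> 2" by linarith
  with fa have "\<bar>f a * ?P\<bar> \<le> t * 2" unfolding abs_mult by (intro mult_mono) auto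
  moreover have "(\<Prod>k\<in>insert a F. 1 + f k) - 1 = (?P - 1) + f a * ?P"
    using insert by (simp add: algebra_simps)
  ultimately show ?case using IH insert(1,2) abs_triangle_ineq[of "?P - 1" "f a * ?P"]
    by (simp add: algebra_simps)
qed

lemma abs_sqrt_minus_one_le:
  fixes y :: real
  assumes "0 \<le> y"
  shows "\<bar>sqrt y - 1\<bar> \<le> \<bar>y - 1\<bar>"
proof -
  have "\<bar>sqrt y - 1\<bar> \<le> \<bar>sqrt y - 1\<bar> * (sqrt y + 1)"
    using assms by (simp add: mult_le_cancel_left1)
  also have "\<dots> = \<bar>(sqrt y - 1) * (sqrt y + 1)\<bar>"
    using assms by (simp add: abs_mult)
  also have "\<dots> = \<bar>y - 1\<bar>"
    using assms by (simp add: algebra_simps)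
  finally show ?thesis .
qed

lemma abs_sqrt_mult_minus_one_le:
  fixes A B e :: real
  assumes "\<bar>A - 1\<bar> \<le> e" "\<bar>B - 1\<bar> \<le> e" "e \<le> 1" "0 \<le> A" "0 \<le> B"
  shows "\<bar>sqrt A * sqrt B - 1\<bar> \<le> 3 * e"
proof -
  have "\<bar>sqrt A * sqrt B - 1\<bar> \<le> \<bar>(A - 1) * B + (B - 1)\<bar>"
    using abs_sqrt_minus_one_le[of "A * B"] assms by (simp add: real_sqrt_mult algebra_simps)
  also have "\<dots> \<le> \<bar>A - 1\<bar> * \<bar>B\<bar> + \<bar>B - 1\<bar>"
    by (metis abs_mult abs_triangle_ineq)
  also have "\<bar>A - 1\<bar> * \<bar>B\<bar> \<le> e * 2"
    using assms by (intro mult_mono) auto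
  finally show ?thesis using assms(2) by linarith
qed

lemma scale_sq_close_to_one:
  fixes c \<delta> :: real
  assumes "sqrt (1 - \<delta>) \<le> c" and "c \<le> sqrt (1 + \<delta>)" and "\<delta> \<le> 1"
  shows "0 \<le> c" and "\<bar>c^2 - 1\<bar> \<le> \<delta>"
proof -
  show c0: "0 \<le> c" using assms(1,3) real_sqrt_ge_zero[of "1 - \<delta>"] by linarith
  have "1 - \<delta> \<le> c^2"
    using power_mono[OF assms(1), of 2] assms(3) by simp
  moreover have "0 \<le> sqrt (1 + \<delta>)" using assms(2) c0 by linarith
  then have "c^2 \<le> 1 + \<delta>"
    using power_mono[OF assms(2) c0, of 2] by simp
  ultimately show "\<bar>c^2 - 1\<bar> \<le> \<delta>" by linarith
qed

lemma abs_mult_minus_one_le: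
  fixes c c' \<delta> :: real
  assumes "0 \<le> c" "0 \<le> c'" "\<bar>c^2 - 1\<bar> \<le> \<delta>" "\<bar>c'^2 - 1\<bar> \<le> \<delta>" "\<delta> \<le> 1"
  shows "\<bar>c * c' - 1\<bar> \<le> \<delta>"
proof -
  have lo: "1 - \<delta> \<le> c^2" "1 - \<delta> \<le> c'^2" and hi: "c^2 \<le> 1 + \<delta>" "c'^2 \<le> 1 + \<delta>"
    using assms(3,4) by (simp_all add: abs_le_iff)
  have "(1 - \<delta>)^2 \<le> (c * c')^2"
    unfolding power_mult_distrib power2_eq_square[of "1 - \<delta>"]
    using assms(5) lo by (intro mult_mono) auto
  then have "1 - \<delta> \<le> c * c'" using assms(1,2) by (auto intro: power2_le_imp_le)
  moreover have "(c * c')^2 \<le> (1 + \<delta>)^2"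
    unfolding power_mult_distrib power2_eq_square[of "1 + \<delta>"]
    using hi order_trans[OF zero_le_power2 hi(1)] by (intro mult_mono) auto
  then have "c * c' \<le> 1 + \<delta>" using lo(1) hi(1) by (auto intro: power2_le_imp_le)
  ultimately show ?thesis by linarith
qed

text \<open>The inner product of two images of \<open>\<psi>\<close> has this shape, with \<open>\<alpha>, \<beta>, b\<close> close to one. The error
  splits into the two overlap errors, at most \<open>N \<epsilon> + M \<epsilon>/2\<close>, and perturbation terms of size
  \<open>M (12 \<eta> + 4 \<delta>)\<close>.\<close>

lemma perturbed_inner_close:
  fixes \<alpha> \<beta> P q eps \<delta> \<eta> :: real and \<tau> \<tau>' b :: "nat \<Rightarrow> real"
  assumes alpha: "real N * \<bar>\<alpha> - 1\<bar> \<le> 3 * (2 * real M * \<eta> + \<delta> * real M)"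
    and b: "\<forall>l\<in>{1..M}. \<bar>b l - 1\<bar> \<le> 3 * \<eta>"
    and P: "\<bar>P - real N * q\<bar> \<le> real N * eps" "\<bar>P\<bar> \<le> real N"
    and T: "\<bar>(\<Sum>l=1..M. \<tau> l * \<tau>' l) - real M * q\<bar> \<le> real M * (eps/2)"
      "(\<Sum>l=1..M. \<bar>\<tau> l * \<tau>' l\<bar>) \<le> real M"
    and beta: "\<bar>\<beta> - 1\<bar> \<le> \<delta>" "\<delta> \<le> 1/2"
    and eta: "0 \<le> \<eta>" "12 * \<eta> + 4 * \<delta> \<le> eps/2"
  shows "\<bar>\<alpha> * P + (\<Sum>l=1..M. \<beta> * (\<tau> l * \<tau>' l) * b l) - real (M + N) * q\<bar> \<le> real (M + N) * eps"
proof -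
  define T where "T = (\<Sum>l=1..M. \<tau> l * \<tau>' l)"
  define E where "E = (\<Sum>l=1..M. \<tau> l * \<tau>' l * (b l - 1))"
  have "\<bar>E\<bar> \<le> (\<Sum>l=1..M. \<bar>\<tau> l * \<tau>' l\<bar> * (3 * \<eta>))"
    unfolding E_def abs_mult[symmetric] using b
    by (intro order_trans[OF sum_abs sum_mono]) (auto simp: abs_mult intro: mult_left_mono)
  also have "\<dots> \<le> real M * (3 * \<eta>)"
    using T(2) eta(1) by (simp add: mult_right_mono flip: sum_distrib_right)
  finally have E: "\<bar>E\<bar> \<le> 3 * \<eta> * real M" by (simp add: mult.commute)
  have "\<bar>T\<bar> \<le> real M" unfolding T_def using sum_abs T(2) by (rule order_trans)
  then have T_err: "\<bar>(\<beta> - 1) * T\<bar> \<le> \<delta> * real M"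
    unfolding abs_mult using beta by (intro mult_mono) auto
  have E_err: "\<bar>\<beta> * E\<bar> \<le> 2 * (3 * \<eta> * real M)"
    unfolding abs_mult using beta E by (intro mult_mono) auto
  have P_err: "\<bar>(\<alpha> - 1) * P\<bar> \<le> 3 * (2 * real M * \<eta> + \<delta> * real M)"
    using alpha mult_left_mono[OF P(2) abs_ge_zero[of "\<alpha> - 1"]]
    by (simp add: abs_mult mult.commute)
  have triangle: "\<bar>x1 + x2 + x3 + x4 + x5\<bar> \<le> \<bar>x1\<bar> + \<bar>x2\<bar> + \<bar>x3\<bar> + \<bar>x4\<bar> + \<bar>x5\<bar>"
    for x1 x2 x3 x4 x5 :: real
    by (meson abs_triangle_ineq add_mono order_trans order_refl)
  have decomposition: "\<alpha> * P + (\<Sum>l=1..M. \<beta> * (\<tau> l * \<tau>' l) * b l) - real (M + N) * q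
      = (P - real N * q) + (\<alpha> - 1) * P + (T - real M * q) + (\<beta> - 1) * T + \<beta> * E"
    unfolding T_def E_def by (simp add: sum_distrib_left sum.distrib[symmetric] algebra_simps)
  have "\<bar>\<alpha> * P + (\<Sum>l=1..M. \<beta> * (\<tau> l * \<tau>' l) * b l) - real (M + N) * q\<bar>
      \<le> real N * eps + 3 * (2 * real M * \<eta> + \<delta> * real M) + real M * (eps/2)
         + \<delta> * real M + 2 * (3 * \<eta> * real M)"
    unfolding decomposition
    using triangle[of "P - real N * q" "(\<alpha> - 1) * P" "T - real M * q" "(\<beta> - 1) * T" "\<beta> * E"]
      P(1) T(1)[folded T_def] P_err T_err E_err
    by linarith
  also have "\<dots> \<le> real (M + N) * eps"
    using mult_left_mono[OF eta(2), of "real M"] by (simp add: algebra_simps)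
  finally show ?thesis .
qed

lemma on_sphere_sum_abs_mult_le:
  assumes "on_sphere K x" and "on_sphere K y"
  shows "(\<Sum>i=1..K. \<bar>x i * y i\<bar>) \<le> real K"
proof -
  have "(\<Sum>i=1..K. \<bar>x i * y i\<bar>) \<le> (\<Sum>i=1..K. ((x i)^2 + (y i)^2) / 2)"
  proof (rule sum_mono)
    fix i
    have "0 \<le> (\<bar>x i\<bar> - \<bar>y i\<bar>)^2" by simp
    then show "\<bar>x i * y i\<bar> \<le> ((x i)^2 + (y i)^2) / 2"
      by (simp add: power2_eq_square abs_mult algebra_simps)
  qed
  also have "\<dots> = real K"
    using assms unfolding on_sphere_def by (simp add: sum.distrib flip: sum_divide_distrib)
  finally show ?thesis .
qed

lemma overlap_close_iff:
  assumes "0 < K"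
  shows "\<bar>overlap K \<sigma> \<sigma>' j j' - q\<bar> \<le> e
     \<longleftrightarrow> \<bar>(\<Sum>i=1..K. \<sigma> j i * \<sigma>' j' i) - real K * q\<bar> \<le> real K * e"
proof -
  have "(\<Sum>i=1..K. \<sigma> j i * \<sigma>' j' i) - real K * q = real K * (overlap K \<sigma> \<sigma>' j j' - q)"
    using assms by (simp add: overlap_def algebra_simps)
  then show ?thesis using assms by (simp add: abs_mult)
qed

definition a_sq :: "nat \<Rightarrow> nat \<Rightarrow> (nat \<Rightarrow> real) \<Rightarrow> nat \<Rightarrow> real" where
  "a_sq M N x l = (\<Prod>k=1..l-1. 1 + (1 - (x k)^2) / (real (M + N) - real k))"

lemma a_fun_eq_sqrt_a_sq: "a_fun M N x l = sqrt (a_sq M N x l)"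
  by (simp add: a_fun_def a_sq_def real_sqrt_prod)

lemma a_sq_Suc:
  "a_sq M N x (Suc (Suc L)) = a_sq M N x (Suc L) * (1 + (1 - (x (Suc L))^2) / (real (M + N) - real (Suc L)))"
  unfolding a_sq_def by (simp add: prod.cl_ivl_Suc)

lemma a_sq_nonneg:
  assumes "\<forall>k\<in>{1..M}. 0 \<le> 1 + (1 - (x k)^2) / (real (M + N) - real k)" and "l \<le> M + 1"
  shows "0 \<le> a_sq M N x l"
  unfolding a_sq_def using assms by (intro prod_nonneg) auto

lemma a_sq_telescope:
  assumes "0 < N" and "L \<le> M"
  shows "(\<Sum>l=1..L. (x l)^2 * a_sq M N x l) + (real (M + N) - real L) * a_sq M N x (L + 1) = real (M + N)"
  using assms(2)
proof (induction L)
  case 0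
  then show ?case by (simp add: a_sq_def)
next
  case (Suc L)
  have "real (M + N) - real (Suc L) \<noteq> 0" using Suc.prems assms(1) by simp
  then have "(real (M + N) - real (Suc L)) * a_sq M N x (Suc (Suc L))
      = (real (M + N) - real L) * a_sq M N x (Suc L) - (x (Suc L))^2 * a_sq M N x (Suc L)"
    unfolding a_sq_Suc by (simp add: field_simps)
  with Suc show ?case by (simp add: sum.cl_ivl_Suc)
qed

lemma a_sq_close_to_one:
  assumes "0 < N" and "real N \<ge> 2 * real M * (2 * real M + 1)"
    and "\<forall>k\<in>{1..M}. (x k)^2 \<le> 2 * real M" and "l \<le> M + 1"
  shows "\<bar>a_sq M N x l - 1\<bar> \<le> 2 * real M * (2 * real M + 1) / real N"
proof -
  define t where "t = (2 * real M + 1) / real N"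
  have factor: "\<bar>(1 - (x k)^2) / (real (M + N) - real k)\<bar> \<le> t" if "k \<in> {1..l-1}" for k
  proof -
    have "(x k)^2 \<le> 2 * real M" using assms(3,4) that by auto
    then have "\<bar>1 - (x k)^2\<bar> \<le> 2 * real M + 1"
      unfolding abs_le_iff using zero_le_power2[of "x k"] by linarith
    moreover have "real N \<le> real (M + N) - real k" using assms(4) that by auto
    ultimately show ?thesis
      unfolding t_def abs_divide using assms(1) by (intro frac_le) auto
  qed
  have "real (card {1..l-1}) * t \<le> real M * t"
    using assms(4) by (intro mult_right_mono) (auto simp: t_def)
  also have "\<dots> \<le> 1/2" using assms(1,2) by (simp add: t_def field_simps)
  finally have "\<bar>a_sq M N x l - 1\<bar> \<le> 2 * real (card {1..l-1}) * t"
    unfolding a_sq_def using factor by (intro prod_one_plus_close_to_one) auto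
  also have "\<dots> \<le> 2 * real M * t"
    using assms(4) by (intro mult_right_mono) (auto simp: t_def)
  finally show ?thesis by (simp add: t_def)
qed

lemma a_sq_last_close_to_one:
  assumes "0 < N" and "\<forall>l\<in>{1..M}. \<bar>a_sq M N w l - 1\<bar> \<le> \<eta>"
  shows "real N * \<bar>a_sq M N w (M + 1) - 1\<bar>
           \<le> \<bar>(\<Sum>l=1..M. (w l)^2) - real M\<bar> + (\<Sum>l=1..M. (w l)^2) * \<eta>"
proof -
  have "real N * (a_sq M N w (M + 1) - 1)
      = (real M - (\<Sum>l=1..M. (w l)^2)) + (\<Sum>l=1..M. (w l)^2 * (1 - a_sq M N w l))"
    using a_sq_telescope[OF assms(1), of M M w] by (simp add: algebra_simps sum_subtractf)
  moreover have "\<bar>\<Sum>l=1..M. (w l)^2 * (1 - a_sq M N w l)\<bar> \<le> (\<Sum>l=1..M. (w l)^2 * \<eta>)"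
  proof (rule order_trans[OF sum_abs sum_mono])
    fix l assume "l \<in> {1..M}"
    then have "\<bar>1 - a_sq M N w l\<bar> \<le> \<eta>" using assms(2) by (simp add: abs_minus_commute)
    then show "\<bar>(w l)^2 * (1 - a_sq M N w l)\<bar> \<le> (w l)^2 * \<eta>"
      by (simp add: abs_mult mult_left_mono)
  qed
  ultimately have "\<bar>real N * (a_sq M N w (M + 1) - 1)\<bar>
      \<le> \<bar>real M - (\<Sum>l=1..M. (w l)^2)\<bar> + (\<Sum>l=1..M. (w l)^2 * \<eta>)"
    by (smt (verit) abs_triangle_ineq)
  then show ?thesis
    using assms(1) by (simp add: abs_mult abs_minus_commute sum_distrib_right)
qed

lemma a_sq_close_to_one_scaled_sphere:
  assumes N: "0 < N" "real N \<ge> 2 * real M * (2 * real M + 1)"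
    and "on_sphere M \<tau>" and w: "\<forall>i\<in>{1..M}. w i = c * \<tau> i"
    and c: "\<bar>c^2 - 1\<bar> \<le> \<delta>" "\<delta> \<le> 1/2"
  defines "\<eta> \<equiv> 2 * real M * (2 * real M + 1) / real N"
  shows "\<forall>l\<le>M+1. \<bar>a_sq M N w l - 1\<bar> \<le> \<eta>"
    and "real N * \<bar>a_sq M N w (M + 1) - 1\<bar> \<le> 2 * real M * \<eta> + \<delta> * real M"
proof -
  have "(\<Sum>l=1..M. (w l)^2) = (\<Sum>l=1..M. c^2 * (\<tau> l)^2)"
    using w by (intro sum.cong) (auto simp: power_mult_distrib)
  also have "\<dots> = c^2 * real M"
    using \<open>on_sphere M \<tau>\<close> unfolding on_sphere_def by (simp flip: sum_distrib_left)
  finally have S: "(\<Sum>l=1..M. (w l)^2) = c^2 * real M" .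
  have c2: "c^2 \<le> 2" using c by (simp add: abs_le_iff)
  have "(w k)^2 \<le> 2 * real M" if "k \<in> {1..M}" for k
  proof -
    have "(w k)^2 \<le> (\<Sum>l=1..M. (w l)^2)" using that by (intro member_le_sum) auto
    also have "\<dots> \<le> 2 * real M" unfolding S using c2 by (intro mult_right_mono) auto
    finally show ?thesis .
  qed
  then show bound: "\<forall>l\<le>M+1. \<bar>a_sq M N w l - 1\<bar> \<le> \<eta>"
    using a_sq_close_to_one[OF N] unfolding \<eta>_def by blast
  have "real N * \<bar>a_sq M N w (M + 1) - 1\<bar> \<le> \<bar>c^2 * real M - real M\<bar> + c^2 * real M * \<eta>"
    using a_sq_last_close_to_one[OF N(1), of M w \<eta>] bound S by simp
  also have "\<bar>c^2 * real M - real M\<bar> = \<bar>c^2 - 1\<bar> * real M"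
    by (metis abs_mult abs_of_nat left_diff_distrib' mult_1)
  also have "\<bar>c^2 - 1\<bar> * real M \<le> \<delta> * real M" using c by (intro mult_right_mono) auto
  also have "c^2 * real M * \<eta> \<le> 2 * real M * \<eta>"
    using c2 N unfolding \<eta>_def by (intro mult_right_mono) auto
  finally show "real N * \<bar>a_sq M N w (M + 1) - 1\<bar> \<le> 2 * real M * \<eta> + \<delta> * real M" by simp
qed

lemma psi_inner:
  "(\<Sum>i=1..M+N. psi M N s w i * psi M N s' w' i)
   = a_fun M N w (M+1) * a_fun M N w' (M+1) * (\<Sum>i=1..N. s i * s' i)
     + (\<Sum>l=1..M. w l * w' l * (a_fun M N w l * a_fun M N w' l))"
proof -
  have "(\<Sum>i=1..N+M. psi M N s w i * psi M N s' w' i)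
     = (\<Sum>i=1..N. psi M N s w i * psi M N s' w' i) + (\<Sum>i=N+1..N+M. psi M N s w i * psi M N s' w' i)"
    by (rule sum.ub_add_nat) simp
  also have "(\<Sum>i=1..N. psi M N s w i * psi M N s' w' i)
     = a_fun M N w (M+1) * a_fun M N w' (M+1) * (\<Sum>i=1..N. s i * s' i)"
    by (simp add: psi_def sum_distrib_left algebra_simps)
  also have "(\<Sum>i=N+1..N+M. psi M N s w i * psi M N s' w' i)
     = (\<Sum>i=1..M. psi M N s w (i+N) * psi M N s' w' (i+N))"
    using sum.shift_bounds_cl_nat_ivl[of _ 1 N M] by (simp add: add.commute)
  also have "\<dots> = (\<Sum>l=1..M. w l * w' l * (a_fun M N w l * a_fun M N w' l))"
    by (intro sum.cong) (auto simp: psi_def)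
  finally show ?thesis by (simp add: add.commute)
qed

lemma psi_on_sphere:
  assumes "0 < N" and "on_sphere N s" and "\<forall>l\<le>M+1. 0 \<le> a_sq M N w l"
  shows "on_sphere (M + N) (psi M N s w)"
proof -
  have a_fun_sq: "a_fun M N w l * a_fun M N w l = a_sq M N w l" if "l \<le> M + 1" for l
    using assms(3) that by (simp add: a_fun_eq_sqrt_a_sq)
  have "(\<Sum>i=1..M+N. (psi M N s w i)^2)
      = a_sq M N w (M+1) * real N + (\<Sum>l=1..M. (w l)^2 * a_sq M N w l)"
    using assms(2) unfolding power2_eq_square psi_inner on_sphere_def
    by (simp add: a_fun_sq mult.commute)
  also have "\<dots> = real (M + N)"
    using a_sq_telescope[OF assms(1), of M M w] by (simp add: algebra_simps)
  finally show ?thesis unfolding on_sphere_def .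
qed

lemma psi_inner_close:
  assumes N: "0 < N" "real N \<ge> 2 * real M * (2 * real M + 1)"
    and sphere: "on_sphere N s" "on_sphere N s'" "on_sphere M \<tau>" "on_sphere M \<tau>'"
    and overlap: "\<bar>(\<Sum>i=1..N. s i * s' i) - real N * q\<bar> \<le> real N * eps"
      "\<bar>(\<Sum>i=1..M. \<tau> i * \<tau>' i) - real M * q\<bar> \<le> real M * (eps/2)"
    and w: "\<forall>i\<in>{1..M}. w i = c * \<tau> i" "\<forall>i\<in>{1..M}. w' i = c' * \<tau>' i"
    and c: "0 \<le> c" "0 \<le> c'" "\<bar>c^2 - 1\<bar> \<le> \<delta>" "\<bar>c'^2 - 1\<bar> \<le> \<delta>" "\<delta> \<le> 1/2"
    and small: "12 * (2 * real M * (2 * real M + 1) / real N) + 4 * \<delta> \<le> eps / 2"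
  shows "\<bar>(\<Sum>i=1..M+N. psi M N s w i * psi M N s' w' i) - real (M + N) * q\<bar> \<le> real (M + N) * eps"
proof -
  define \<eta> where "\<eta> = 2 * real M * (2 * real M + 1) / real N"
  have \<eta>: "0 \<le> \<eta>" "\<eta> \<le> 1" using N unfolding \<eta>_def by auto
  note A = a_sq_close_to_one_scaled_sphere[OF N sphere(3) w(1) c(3,5), folded \<eta>_def]
  note A' = a_sq_close_to_one_scaled_sphere[OF N sphere(4) w(2) c(4,5), folded \<eta>_def]
  have nonneg: "0 \<le> a_sq M N w l" "0 \<le> a_sq M N w' l" if "l \<le> M + 1" for l
    using A(1) A'(1) \<eta>(2) that by (fastforce simp: abs_le_iff)+
  have last: "real N * \<bar>a_fun M N w (M+1) * a_fun M N w' (M+1) - 1\<bar> \<le> 3 * (2 * real M * \<eta> + \<delta> * real M)"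
  proof -
    define \<gamma> where "\<gamma> = (2 * real M * \<eta> + \<delta> * real M) / real N"
    have "2 * real M * \<eta> + \<delta> * real M \<le> 3 * real M"
      using mult_left_mono[OF \<eta>(2), of "2 * real M"] mult_right_mono[OF c(5), of "real M"] by simp
    also have "\<dots> \<le> real N"
    proof -
      have "3 * real M \<le> 2 * real M * (2 * real M + 1)"
      proof (cases "M = 0")
        case False
        then have "real M * 1 \<le> real M * (4 * real M)" by (intro mult_left_mono) auto
        then show ?thesis by (simp add: algebra_simps)
      qed simp
      then show ?thesis using N(2) by linarith
    qed
    finally have "\<gamma> \<le> 1" using N(1) unfolding \<gamma>_def by simp
    moreover have "\<bar>a_sq M N w (M+1) - 1\<bar> \<le> \<gamma>" "\<bar>a_sq M N w' (M+1) - 1\<bar> \<le> \<gamma>"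
      using A(2) A'(2) N(1) unfolding \<gamma>_def by (simp_all add: field_simps)
    ultimately have "\<bar>a_fun M N w (M+1) * a_fun M N w' (M+1) - 1\<bar> \<le> 3 * \<gamma>"
      unfolding a_fun_eq_sqrt_a_sq by (intro abs_sqrt_mult_minus_one_le nonneg) auto
    then show ?thesis using N(1) unfolding \<gamma>_def by (simp add: field_simps)
  qed
  have "(\<Sum>i=1..M+N. psi M N s w i * psi M N s' w' i)
      = a_fun M N w (M+1) * a_fun M N w' (M+1) * (\<Sum>i=1..N. s i * s' i)
        + (\<Sum>l=1..M. (c * c') * (\<tau> l * \<tau>' l) * (a_fun M N w l * a_fun M N w' l))"
    unfolding psi_inner using w by (auto intro!: sum.cong simp: algebra_simps)
  also have "\<bar>\<dots> - real (M + N) * q\<bar> \<le> real (M + N) * eps"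
  proof (rule perturbed_inner_close[OF last _ overlap(1) _ overlap(2) _ _ c(5) \<eta>(1)])
    show "\<forall>l\<in>{1..M}. \<bar>a_fun M N w l * a_fun M N w' l - 1\<bar> \<le> 3 * \<eta>"
      unfolding a_fun_eq_sqrt_a_sq using A(1) A'(1) \<eta>(2)
      by (auto intro!: abs_sqrt_mult_minus_one_le nonneg)
    show "\<bar>\<Sum>i=1..N. s i * s' i\<bar> \<le> real N"
      using sum_abs on_sphere_sum_abs_mult_le[OF sphere(1,2)] by (rule order_trans)
    show "(\<Sum>l=1..M. \<bar>\<tau> l * \<tau>' l\<bar>) \<le> real M"
      by (rule on_sphere_sum_abs_mult_le[OF sphere(3,4)])
    show "\<bar>c * c' - 1\<bar> \<le> \<delta>" using c by (intro abs_mult_minus_one_le) auto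
    show "12 * \<eta> + 4 * \<delta> \<le> eps / 2" using small unfolding \<eta>_def .
  qed
  finally show ?thesis .
qed

lemma Psi_mem_Qset:
  assumes M: "0 < M" and N: "0 < N" "real N \<ge> 2 * real M * (2 * real M + 1)"
    and \<delta>: "\<delta> \<le> 1/2" and small: "12 * (2 * real M * (2 * real M + 1) / real N) + 4 * \<delta> \<le> eps / 2"
    and \<sigma>: "\<sigma> \<in> Qset N n Q eps" and \<omega>: "\<omega> \<in> Omega_set M n Q (eps / 2) \<delta>"
    and defined: "Psi_defined M N n \<omega>"
  shows "Psi M N \<sigma> \<omega> \<in> Qset (M + N) n Q eps"
proof -
  obtain s \<tau> where \<tau>: "\<tau> \<in> Qset M n Q (eps/2)"
    and s\<tau>: "\<forall>j\<in>{1..n}. s j \<in> {sqrt (1 - \<delta>)..sqrt (1 + \<delta>)} \<and> (\<forall>i\<in>{1..M}. \<omega> j i = s j * \<tau> j i)"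
    using \<omega> unfolding Omega_set_def by blast
  have s: "sqrt (1 - \<delta>) \<le> s j \<and> s j \<le> sqrt (1 + \<delta>)"
    and \<omega>_eq: "\<forall>i\<in>{1..M}. \<omega> j i = s j * \<tau> j i" if "j \<in> {1..n}" for j
    using s\<tau> that by auto
  have s_bounds: "0 \<le> s j" "\<bar>(s j)^2 - 1\<bar> \<le> \<delta>" if "j \<in> {1..n}" for j
    using scale_sq_close_to_one[of \<delta> "s j"] s[OF that] \<delta> by auto
  have sphere: "on_sphere N (\<sigma> j)" "on_sphere M (\<tau> j)" if "j \<in> {1..n}" for j
    using \<sigma> \<tau> that unfolding Qset_def by auto
  show ?thesis
    unfolding Qset_def
  proof (intro CollectI conjI ballI)
    fix j assume j: "j \<in> {1..n}"
    have "\<forall>l\<le>M+1. 0 \<le> a_sq M N (\<omega> j) l"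
      using defined j unfolding Psi_defined_def by (auto intro: a_sq_nonneg)
    then show "on_sphere (M + N) (Psi M N \<sigma> \<omega> j)"
      unfolding Psi_def by (rule psi_on_sphere[OF N(1) sphere(1)[OF j]])
  next
    fix j j' assume j: "j \<in> {1..n}" and j': "j' \<in> {1..n}"
    have "\<bar>(\<Sum>i=1..N. \<sigma> j i * \<sigma> j' i) - real N * Q j j'\<bar> \<le> real N * eps"
      using \<sigma> j j' unfolding Qset_def overlap_close_iff[OF N(1)] by auto
    moreover have "\<bar>(\<Sum>i=1..M. \<tau> j i * \<tau> j' i) - real M * Q j j'\<bar> \<le> real M * (eps/2)"
      using \<tau> j j' unfolding Qset_def overlap_close_iff[OF M] by auto
    ultimately show "\<bar>overlap (M + N) (Psi M N \<sigma> \<omega>) (Psi M N \<sigma> \<omega>) j j' - Q j j'\<bar> \<le> eps"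
      unfolding overlap_close_iff[OF add_pos_pos[OF M N(1)]] Psi_def
      by (intro psi_inner_close[OF N sphere(1)[OF j] sphere(1)[OF j'] sphere(2)[OF j] sphere(2)[OF j']
            _ _ \<omega>_eq[OF j] \<omega>_eq[OF j'] s_bounds(1)[OF j] s_bounds(1)[OF j']
            s_bounds(2)[OF j] s_bounds(2)[OF j'] \<delta> small]) auto
  qed
qed

theorem lemma10:
  fixes n M :: nat and Q :: "nat \<Rightarrow> nat \<Rightarrow> real"
  assumes "n \<ge> 1" and "M \<ge> 1"
    and Q_sym: "\<forall>j\<in>{1..n}. \<forall>j'\<in>{1..n}. Q j j' = Q j' j"
    and Q_psd: "\<forall>v :: nat \<Rightarrow> real. 0 \<le> (\<Sum>j=1..n. \<Sum>j'=1..n. v j * Q j j' * v j')"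
    and Q_diag: "\<forall>j\<in>{1..n}. Q j j = 1"
  shows "\<forall>eps > 0. \<exists>N0. \<forall>N \<ge> N0. \<exists>\<delta>. 0 < \<delta> \<and> \<delta> < eps \<and>
           (\<forall>\<sigma> \<omega>. (\<forall>j\<in>{1..n}. on_sphere N (\<sigma> j)) \<and> Psi_defined M N n \<omega> \<longrightarrow>
              (indicator (Qset (M + N) n Q eps) (Psi M N \<sigma> \<omega>) :: real)
                \<ge> indicator (Qset N n Q eps) \<sigma> * indicator (Omega_set M n Q (eps / 2) \<delta>) \<omega>)"
proof (intro allI impI)
  \<comment> \<open>The inclusion holds for any \<open>Q\<close>; its properties only matter for the sets to be nonempty.\<close>
  fix eps :: real
  assume eps: "eps > 0"
  define C where "C = 2 * real M * (2 * real M + 1)"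
  define \<delta> where "\<delta> = min (eps / 16) (1/2)"
  have \<delta>: "0 < \<delta>" "\<delta> < eps" "\<delta> \<le> 1/2" "4 * \<delta> \<le> eps / 4"
    using eps by (auto simp: \<delta>_def)
  show "\<exists>N0. \<forall>N \<ge> N0. \<exists>\<delta>. 0 < \<delta> \<and> \<delta> < eps \<and>
           (\<forall>\<sigma> \<omega>. (\<forall>j\<in>{1..n}. on_sphere N (\<sigma> j)) \<and> Psi_defined M N n \<omega> \<longrightarrow>
              (indicator (Qset (M + N) n Q eps) (Psi M N \<sigma> \<omega>) :: real)
                \<ge> indicator (Qset N n Q eps) \<sigma> * indicator (Omega_set M n Q (eps / 2) \<delta>) \<omega>)"
  proof (intro exI[of _ "nat \<lceil>48 * C / eps\<rceil> + nat \<lceil>C\<rceil> + 1"] allI impI exI[of _ \<delta>] conjI \<delta>(1,2))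
    fix N assume N0: "nat \<lceil>48 * C / eps\<rceil> + nat \<lceil>C\<rceil> + 1 \<le> N"
    then have "real (nat \<lceil>48 * C / eps\<rceil>) + real (nat \<lceil>C\<rceil>) + 1 \<le> real N"
      by (metis of_nat_1 of_nat_add of_nat_mono)
    then have "48 * C / eps \<le> real N" "C \<le> real N"
      using real_nat_ceiling_ge[of "48 * C / eps"] real_nat_ceiling_ge[of C] by linarith+
    then have N: "0 < N" "C \<le> real N" "48 * C \<le> eps * real N"
      using N0 eps by (auto simp: field_simps)
    then have "C / real N \<le> eps / 48" by (simp add: field_simps)
    then have "12 * (C / real N) + 4 * \<delta> \<le> eps / 2" using \<delta>(4) by linarith
    moreover fix \<sigma> \<omega>
    assume "(\<forall>j\<in>{1..n}. on_sphere N (\<sigma> j)) \<and> Psi_defined M N n \<omega>"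
    ultimately show "(indicator (Qset (M + N) n Q eps) (Psi M N \<sigma> \<omega>) :: real)
        \<ge> indicator (Qset N n Q eps) \<sigma> * indicator (Omega_set M n Q (eps / 2) \<delta>) \<omega>"
      using Psi_mem_Qset[of M N \<delta> eps] \<open>M \<ge> 1\<close> N \<delta>(3) unfolding C_def
      by (auto simp: indicator_def)
  qed
qed

end
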